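(* Let $q$ be a prime power, $n\ge 3$, and let $\Phi_1$ be the set of lines of $\mathrm{AG}(n,q)$. Let $V_0,V_1,V_2,V_3$ be the common eigenspaces of the association scheme on $\Phi_1$ described in the context. Then the characteristic vectors of the point-pencils of $\mathrm{AG}(n,q)$ form a basis of $V_0\perp V_1$.
   Context: $\mathrm{AG}(n,q)$ is $\mathrm{PG}(n,q)$ with a hyperplane $\pi_\infty$ removed; affine lines are projective lines not contained in $\pi_\infty$. Define relations on $\Phi_1$: $(\ell,\ell')\in R_0$ if $\ell=\ell'$; $\in R_1$ if they meet in an affine point; $\in R_2$ if they are distinct and meet in a point of $\pi_\infty$; $\in R_3$ if they are disjoint in $\mathrm{PG}(n,q)$. Let $B_1,B_2,B_3$ be the corresponding adjacency matrices (real $|\Phi_1|\times|\Phi_1|$). These commute and $\mathbb{R}^{\Phi_1}$ is the orthogonal direct sum of four common eigenspaces $V_0,V_1,V_2,V_3$, on which $(B_1,B_2,B_3)$ act as the scalars: on $V_0$ (spanned by the all-ones vector) $\left(\frac{q^{n+1}-q^2}{q-1},\,q^{n-1}-1,\,\frac{q^2-(q+1)q^n+q^{2n-1}}{q-1}\right)$; on $V_1$ $\left(\frac{q^n-q^2}{q-1},\,-1,\,\frac{q^2-q^n}{q-1}\right)$; on $V_2$ $(-q,-1,q)$; on $V_3$ $(-q,\,q^{n-1}-1,\,q-q^{n-1})$. A point-pencil is the set of all affine lines through a fixed affine point. *)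

theory Defs
  imports "HOL-Analysis.Analysis"
begin

text \<open>AG(n,q): points are vectors in k^n over a finite field k with q = CARD(k),
  n = CARD('n). Affine lines are the sets p + k v with v nonzero.\<close>

definition affine_lines :: "(('k::field)^'n) set set" where
  "affine_lines = {{p + t *s v | t. True} | p v. v \<noteq> 0}"

text \<open>Direction (difference set) of a line; two affine lines meet in the same
  point at infinity iff their directions coincide.\<close>
definition line_dir :: "(('k::field)^'n) set \<Rightarrow> ('k^'n) set" where
  "line_dir l = {x - y | x y. x \<in> l \<and> y \<in> l}"

definition rel1 :: "(('k::field)^'n) set \<Rightarrow> ('k^'n) set \<Rightarrow> bool" where
  "rel1 l l' \<longleftrightarrow> l \<noteq> l' \<and> l \<inter> l' \<noteq> {}"

definition rel2 :: "(('k::field)^'n) set \<Rightarrow> ('k^'n) set \<Rightarrow> bool" where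
  "rel2 l l' \<longleftrightarrow> l \<noteq> l' \<and> line_dir l = line_dir l'"

definition rel3 :: "(('k::field)^'n) set \<Rightarrow> ('k^'n) set \<Rightarrow> bool" where
  "rel3 l l' \<longleftrightarrow> l \<inter> l' = {} \<and> line_dir l \<noteq> line_dir l'"

text \<open>Vectors of R^Phi1 are represented as real functions on sets of points
  vanishing outside the set of affine lines.\<close>
definition line_space :: "((('k::field)^'n) set \<Rightarrow> real) set" where
  "line_space = {f. \<forall>l. l \<notin> (affine_lines :: ('k^'n) set set) \<longrightarrow> f l = 0}"

definition adj_op ::
  "((('k::field)^'n) set \<Rightarrow> ('k^'n) set \<Rightarrow> bool) \<Rightarrow> (('k^'n) set \<Rightarrow> real) \<Rightarrow> ('k^'n) set \<Rightarrow> real" where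
  "adj_op R f l = (if l \<in> affine_lines then (\<Sum>l'\<in>{l'\<in>affine_lines. R l l'}. f l') else 0)"

definition common_eigenspace :: "real \<Rightarrow> real \<Rightarrow> real \<Rightarrow> ((('k::field)^'n) set \<Rightarrow> real) set" where
  "common_eigenspace a b c = {f \<in> line_space.
      adj_op rel1 f = (\<lambda>l. a * f l) \<and> adj_op rel2 f = (\<lambda>l. b * f l) \<and> adj_op rel3 f = (\<lambda>l. c * f l)}"

definition V0 :: "((('k::{field,finite})^'n) set \<Rightarrow> real) set" where
  "V0 = (let q = real CARD('k); n = CARD('n) in
     common_eigenspace ((q^(n+1) - q^2)/(q-1)) (q^(n-1) - 1)
        ((q^2 - (q+1)*q^n + q^(2*n-1))/(q-1)))"

definition V1 :: "((('k::{field,finite})^'n) set \<Rightarrow> real) set" where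
  "V1 = (let q = real CARD('k); n = CARD('n) in
     common_eigenspace ((q^n - q^2)/(q-1)) (-1) ((q^2 - q^n)/(q-1)))"

definition V2 :: "((('k::{field,finite})^'n) set \<Rightarrow> real) set" where
  "V2 = (let q = real CARD('k) in common_eigenspace (-q) (-1) q)"

definition V3 :: "((('k::{field,finite})^'n) set \<Rightarrow> real) set" where
  "V3 = (let q = real CARD('k); n = CARD('n) in
     common_eigenspace (-q) (q^(n-1) - 1) (q - q^(n-1)))"

definition pencil_vec :: "('k::field)^'n \<Rightarrow> ('k^'n) set \<Rightarrow> real" where
  "pencil_vec p l = (if l \<in> affine_lines \<and> p \<in> l then 1 else 0)"

end

theory Submission
  imports Defs
begin

text \<open>Write \<open>N c = (\<Sum>p. c p * pencil_vec p)\<close>, so that \<open>N c l\<close> is the sum of \<open>c\<close> over the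
  points of \<open>l\<close>, and let \<open>N\<^sup>T f p\<close> be the sum of \<open>f\<close> over the lines through \<open>p\<close>. Two points
  lie on exactly one line and each point lies on \<open>r = (q\<^sup>n - 1) / (q - 1)\<close> lines, so
  \<open>N\<^sup>T N = (r - 1) I + J\<close>, which is nonsingular for \<open>n \<ge> 2\<close>: the pencil vectors are
  independent. Counting, for a line \<open>l\<close> and a point \<open>x\<close>, the lines through \<open>x\<close> in each relation
  with \<open>l\<close> expresses \<open>B\<^sub>i N c\<close> through the sums of \<open>c\<close> over \<open>l\<close> and over all points; hence \<open>N\<close>
  maps constants into \<open>V\<^sub>0\<close> and functions of total weight zero into \<open>V\<^sub>1\<close>. Conversely
  \<open>N N\<^sup>T = q I + B\<^sub>1\<close>, and \<open>B\<^sub>1\<close> acts on \<open>V\<^sub>0\<close> and \<open>V\<^sub>1\<close> by \<open>q (r - 1)\<close> and \<open>r - q - 1\<close>,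
  so \<open>N N\<^sup>T\<close> is invertible on \<open>V\<^sub>0 \<oplus> V\<^sub>1\<close>, which therefore lies in the range of \<open>N\<close>.\<close>

section \<open>Affine lines\<close>

definition affine_line :: "('k::field)^'n \<Rightarrow> 'k^'n \<Rightarrow> ('k^'n) set" where
  "affine_line p v = {p + t *s v | t. True}"

lemma affine_lines_eq: "affine_lines = {affine_line p v | p v. v \<noteq> 0}"
  unfolding affine_lines_def affine_line_def by simp

lemma mem_affine_line: "x \<in> affine_line p v \<longleftrightarrow> (\<exists>t. x = p + t *s v)"
  unfolding affine_line_def by auto

lemma affine_line_in_affine_lines: "v \<noteq> 0 \<Longrightarrow> affine_line p v \<in> affine_lines"
  unfolding affine_lines_eq by auto

lemma affine_linesE:
  assumes "l \<in> affine_lines"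
  obtains p v where "v \<noteq> 0" "l = affine_line p v"
  using assms unfolding affine_lines_eq by auto

lemma base_point_in_affine_line: "p \<in> affine_line p v"
  unfolding mem_affine_line by (rule exI[of _ 0]) simp

lemma affine_line_through_two_points: "x \<in> affine_line x (y - x)" "y \<in> affine_line x (y - x)"
  unfolding mem_affine_line by (rule exI[of _ 0], simp) (rule exI[of _ 1], simp)

lemma affine_line_scale:
  assumes "c \<noteq> 0"
  shows "affine_line p (c *s v) = affine_line p v"
proof (rule set_eqI, unfold mem_affine_line, rule iffI)
  fix x
  assume "\<exists>t. x = p + t *s (c *s v)"
  then obtain t where "x = p + t *s (c *s v)" by blast
  then show "\<exists>t. x = p + t *s v" by (intro exI[of _ "t * c"]) (simp add: vec_eq_iff)
next
  fix x
  assume "\<exists>t. x = p + t *s v"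
  then obtain t where "x = p + t *s v" by blast
  then show "\<exists>t. x = p + t *s (c *s v)"
    using assms by (intro exI[of _ "t / c"]) (simp add: vec_eq_iff)
qed

lemma affine_line_rebase:
  assumes "x \<in> affine_line p v"
  shows "affine_line x v = affine_line p v"
proof -
  obtain s where s: "x = p + s *s v" using assms by (auto simp: mem_affine_line)
  show ?thesis
  proof (rule set_eqI, unfold mem_affine_line, rule iffI)
    fix y
    assume "\<exists>t. y = x + t *s v"
    then obtain t where "y = x + t *s v" by blast
    then show "\<exists>t. y = p + t *s v"
      by (intro exI[of _ "s + t"]) (simp add: s vec_eq_iff algebra_simps)
  next
    fix y
    assume "\<exists>t. y = p + t *s v"
    then obtain t where "y = p + t *s v" by blast
    then show "\<exists>t. y = x + t *s v"
      by (intro exI[of _ "t - s"]) (simp add: s vec_eq_iff algebra_simps)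
  qed
qed

lemma affine_line_eq_through_two_points:
  assumes "l \<in> affine_lines" "x \<in> l" "y \<in> l" "x \<noteq> y"
  shows "l = affine_line x (y - x)"
proof -
  obtain p v where l: "l = affine_line p v" using assms(1) by (rule affine_linesE)
  obtain s t where s: "x = p + s *s v" and t: "y = p + t *s v"
    using assms(2,3) by (auto simp: l mem_affine_line)
  have "y - x = (t - s) *s v" by (simp add: s t vec_eq_iff algebra_simps)
  moreover have "t - s \<noteq> 0" using assms(4) s t by auto
  ultimately have "affine_line x (y - x) = affine_line x v" by (metis affine_line_scale)
  also have "\<dots> = l" using assms(2) by (simp add: l affine_line_rebase)
  finally show ?thesis by simp
qed

lemma affine_lines_through_two_points:
  assumes "x \<noteq> y"
  shows "{l \<in> affine_lines. x \<in> l \<and> y \<in> l} = {affine_line x (y - x)}"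
proof (intro set_eqI iffI)
  fix l
  assume "l \<in> {l \<in> affine_lines. x \<in> l \<and> y \<in> l}"
  then show "l \<in> {affine_line x (y - x)}"
    using affine_line_eq_through_two_points[of l x y] assms by simp
next
  fix l
  assume "l \<in> {affine_line x (y - x)}"
  then show "l \<in> {l \<in> affine_lines. x \<in> l \<and> y \<in> l}"
    using affine_line_through_two_points[where x = x and y = y] affine_line_in_affine_lines[of "y - x" x] assms
    by simp
qed

lemma affine_lines_meet_in_one_point:
  assumes "l \<in> affine_lines" "l' \<in> affine_lines" "l \<noteq> l'" "x \<in> l" "x \<in> l'"
  shows "l \<inter> l' = {x}"
proof
  show "l \<inter> l' \<subseteq> {x}"
  proof
    fix y
    assume y: "y \<in> l \<inter> l'"
    show "y \<in> {x}"
    proof (rule ccontr)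
      assume "y \<notin> {x}"
      then have "l = affine_line x (y - x)" "l' = affine_line x (y - x)"
        using affine_line_eq_through_two_points assms y by auto
      with assms(3) show False by simp
    qed
  qed
qed (use assms in auto)

lemma line_dir_affine_line: "line_dir (affine_line p v) = {t *s v | t. True}"
proof (rule set_eqI, rule iffI)
  fix z
  assume "z \<in> line_dir (affine_line p v)"
  then obtain s t where "z = (p + s *s v) - (p + t *s v)"
    unfolding line_dir_def mem_affine_line by blast
  then show "z \<in> {t *s v | t. True}"
    by (intro CollectI exI[of _ "s - t"]) (simp add: vec_eq_iff algebra_simps)
next
  fix z
  assume "z \<in> {t *s v | t. True}"
  then obtain t where "z = t *s v" by blast
  moreover have "p + t *s v \<in> affine_line p v" "p \<in> affine_line p v"
    unfolding mem_affine_line by auto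
  ultimately show "z \<in> line_dir (affine_line p v)" unfolding line_dir_def by force
qed

lemma parallel_affine_lines_eq:
  assumes "l \<in> affine_lines" "l' \<in> affine_lines" "line_dir l = line_dir l'" "x \<in> l" "x \<in> l'"
  shows "l = l'"
proof -
  obtain a v where v: "v \<noteq> 0" "l = affine_line a v" using assms(1) by (rule affine_linesE)
  obtain b w where w: "w \<noteq> 0" "l' = affine_line b w" using assms(2) by (rule affine_linesE)
  have "w \<in> line_dir l'" unfolding w line_dir_affine_line by (intro CollectI exI[of _ 1]) simp
  then obtain c where c: "w = c *s v" using assms(3) v by (auto simp: line_dir_affine_line)
  with w have "c \<noteq> 0" by auto
  have "l' = affine_line x w" using w assms(5) affine_line_rebase by metis
  also have "\<dots> = affine_line x v" using c \<open>c \<noteq> 0\<close> affine_line_scale by simp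
  also have "\<dots> = l" using v assms(4) affine_line_rebase by simp
  finally show ?thesis by simp
qed

lemma card_affine_line:
  fixes v :: "('k::{field,finite})^'n"
  assumes "v \<noteq> 0"
  shows "card (affine_line p v) = CARD('k)"
proof -
  have "affine_line p v = (\<lambda>t::'k. p + t *s v) ` UNIV" unfolding affine_line_def by auto
  moreover have "inj (\<lambda>t::'k. p + t *s v)" using assms by (auto simp: inj_def)
  ultimately show ?thesis by (simp add: card_image)
qed

lemma card_affine_lines_mem:
  fixes l :: "(('k::{field,finite})^'n) set"
  shows "l \<in> affine_lines \<Longrightarrow> card l = CARD('k)"
  by (erule affine_linesE) (simp add: card_affine_line)

lemma card_field_ge_two: "CARD('k::{field,finite}) \<ge> 2"
proof -
  have "card {0::'k, 1} \<le> CARD('k)" by (rule card_mono) auto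
  then show ?thesis by simp
qed

section \<open>Pencils\<close>

abbreviation pencil :: "('k::field)^'n \<Rightarrow> ('k^'n) set set" where
  "pencil x \<equiv> {l \<in> affine_lines. x \<in> l}"

definition pencil_size :: "real \<Rightarrow> nat \<Rightarrow> real" where
  "pencil_size q n = (q ^ n - 1) / (q - 1)"

lemma sum_over_members_swap:
  fixes A :: "('a::finite) set set" and c :: "'a \<Rightarrow> 'b::comm_semiring_1"
  shows "(\<Sum>l\<in>A. \<Sum>x\<in>l. c x) = (\<Sum>x\<in>UNIV. c x * of_nat (card {l \<in> A. x \<in> l}))"
proof -
  have "(\<Sum>l\<in>A. \<Sum>x\<in>l. c x) = (\<Sum>l\<in>A. \<Sum>x\<in>UNIV. if x \<in> l then c x else 0)"
    by (rule sum.cong[OF refl]) (simp add: sum.If_cases)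
  also have "\<dots> = (\<Sum>x\<in>UNIV. \<Sum>l\<in>A. if x \<in> l then c x else 0)" by (rule sum.swap)
  also have "\<dots> = (\<Sum>x\<in>UNIV. c x * of_nat (card {l \<in> A. x \<in> l}))"
    by (rule sum.cong[OF refl]) (simp add: sum.inter_filter[symmetric] mult.commute)
  finally show ?thesis .
qed

lemma card_pencil_through:
  fixes p x :: "('k::field)^'n"
  shows "card {l \<in> pencil p. x \<in> l} = (if x = p then card (pencil p) else 1)"
proof (cases "x = p")
  case False
  then have "{l \<in> pencil p. x \<in> l} = {affine_line p (x - p)}"
    using affine_lines_through_two_points[of p x] by auto
  then show ?thesis using False by simp
qed simp

lemma sum_over_pencil:
  fixes p :: "('k::{field,finite})^'n" and c :: "'k^'n \<Rightarrow> real"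
  shows "(\<Sum>l\<in>pencil p. \<Sum>x\<in>l. c x) = (real (card (pencil p)) - 1) * c p + (\<Sum>x\<in>UNIV. c x)"
proof -
  have "(\<Sum>l\<in>pencil p. \<Sum>x\<in>l. c x)
      = (\<Sum>x\<in>UNIV. c x * (if x = p then real (card (pencil p)) else 1))"
    unfolding sum_over_members_swap card_pencil_through by (rule sum.cong) auto
  also have "\<dots> = c p * real (card (pencil p)) + (\<Sum>x\<in>UNIV - {p}. c x)"
    by (subst sum.remove[of UNIV p]) (auto intro!: sum.cong)
  also have "(\<Sum>x\<in>UNIV - {p}. c x) = (\<Sum>x\<in>UNIV. c x) - c p"
    by (simp add: sum_diff1)
  finally show ?thesis by (simp add: algebra_simps)
qed

lemma card_pencil:
  fixes p :: "('k::{field,finite})^'n"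
  shows "real (card (pencil p)) = pencil_size (real CARD('k)) CARD('n)"
proof -
  txt \<open>Count the \<open>q\<^sup>n - 1\<close> points other than \<open>p\<close> as \<open>q - 1\<close> points on each line through \<open>p\<close>.\<close>
  define c :: "'k^'n \<Rightarrow> real" where "c x = (if x = p then 0 else 1)" for x
  have "(\<Sum>l\<in>pencil p. \<Sum>x\<in>l. c x) = (\<Sum>l\<in>pencil p. real CARD('k) - 1)"
  proof (rule sum.cong[OF refl])
    fix l
    assume l: "l \<in> pencil p"
    then have "(\<Sum>x\<in>l. c x) = c p + (\<Sum>x\<in>l - {p}. c x)" by (simp add: sum.remove)
    also have "\<dots> = real (card (l - {p}))" by (simp add: c_def)
    also have "\<dots> = real CARD('k) - 1"
      using l card_affine_lines_mem[of l] by (simp add: of_nat_diff)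
    finally show "(\<Sum>x\<in>l. c x) = real CARD('k) - 1" .
  qed
  moreover have "(\<Sum>x\<in>UNIV. c x) = real CARD('k) ^ CARD('n) - 1"
    by (simp add: c_def sum.If_cases Compl_eq_Diff_UNIV card_Diff_singleton of_nat_diff)
  ultimately have "(real CARD('k) - 1) * real (card (pencil p)) = real CARD('k) ^ CARD('n) - 1"
    using sum_over_pencil[where p = p and c = c] by (simp add: c_def mult.commute)
  moreover have "real CARD('k) - 1 \<noteq> 0" using card_field_ge_two[where 'k = 'k] by simp
  ultimately show ?thesis unfolding pencil_size_def by (simp add: field_simps)
qed

lemma pencil_rel1_on_line:
  assumes "l \<in> affine_lines" "x \<in> l"
  shows "{l' \<in> pencil x. rel1 l l'} = pencil x - {l}"
  using assms unfolding rel1_def by auto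

lemma pencil_rel2_on_line:
  assumes "l \<in> affine_lines" "x \<in> l"
  shows "{l' \<in> pencil x. rel2 l l'} = {}"
  using assms parallel_affine_lines_eq unfolding rel2_def by blast

lemma pencil_rel3_on_line: "x \<in> l \<Longrightarrow> {l' \<in> pencil x. rel3 l l'} = {}"
  unfolding rel3_def by blast

lemma card_pencil_rel1_off_line:
  fixes l :: "(('k::{field,finite})^'n) set"
  assumes l: "l \<in> affine_lines" and x: "x \<notin> l"
  shows "card {l' \<in> pencil x. rel1 l l'} = CARD('k)"
proof -
  let ?join = "\<lambda>y. affine_line x (y - x)"
  have "{l' \<in> pencil x. rel1 l l'} = ?join ` l"
  proof (intro set_eqI iffI)
    fix l'
    assume "l' \<in> {l' \<in> pencil x. rel1 l l'}"
    then have l': "l' \<in> affine_lines" "x \<in> l'" "l \<inter> l' \<noteq> {}" unfolding rel1_def by auto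
    then obtain y where y: "y \<in> l" "y \<in> l'" by blast
    with x have "l' = ?join y" using affine_line_eq_through_two_points[of l' x y] l' by auto
    then show "l' \<in> ?join ` l" using y by blast
  next
    fix l'
    assume "l' \<in> ?join ` l"
    then obtain y where y: "y \<in> l" "l' = ?join y" by blast
    with x have "y \<noteq> x" by auto
    then have "l' \<in> affine_lines" "x \<in> l'" "y \<in> l'"
      using y affine_line_in_affine_lines[of "y - x" x]
        affine_line_through_two_points[where x = x and y = y] by auto
    then show "l' \<in> {l' \<in> pencil x. rel1 l l'}" using x y unfolding rel1_def by auto
  qed
  moreover have "inj_on ?join l"
  proof (rule inj_onI, rule ccontr)
    fix y z
    assume yz: "y \<in> l" "z \<in> l" "?join y = ?join z" "y \<noteq> z"
    let ?m = "?join y"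
    have "y \<noteq> x" using yz x by auto
    then have m: "?m \<in> affine_lines" "x \<in> ?m" "y \<in> ?m" "z \<in> ?m"
      using affine_line_in_affine_lines[of "y - x" x] yz(3)
        affine_line_through_two_points[where x = x and y = y]
        affine_line_through_two_points[where x = x and y = z] by auto
    have "l = affine_line y (z - y)" using affine_line_eq_through_two_points[of l y z] l yz by simp
    moreover have "?m = affine_line y (z - y)"
      using affine_line_eq_through_two_points[of ?m y z] m yz by simp
    ultimately show False using m x by simp
  qed
  ultimately show ?thesis using card_affine_lines_mem[OF l] by (simp add: card_image)
qed

lemma card_pencil_rel2_off_line:
  assumes "l \<in> affine_lines" "x \<notin> l"
  shows "card {l' \<in> pencil x. rel2 l l'} = 1"
proof -
  obtain a v where v: "v \<noteq> 0" "l = affine_line a v" using assms(1) by (rule affine_linesE)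
  have dir: "line_dir (affine_line x v) = line_dir l" unfolding v line_dir_affine_line ..
  have "{l' \<in> pencil x. rel2 l l'} = {affine_line x v}"
  proof (intro set_eqI iffI)
    fix l'
    assume "l' \<in> {l' \<in> pencil x. rel2 l l'}"
    then have "l' \<in> affine_lines" "x \<in> l'" "line_dir l' = line_dir (affine_line x v)"
      unfolding rel2_def dir by auto
    then show "l' \<in> {affine_line x v}"
      using parallel_affine_lines_eq affine_line_in_affine_lines[OF v(1)] base_point_in_affine_line
      by blast
  next
    fix l'
    assume "l' \<in> {affine_line x v}"
    then show "l' \<in> {l' \<in> pencil x. rel2 l l'}"
      using assms(2) dir affine_line_in_affine_lines[OF v(1)] base_point_in_affine_line[of x v]
      unfolding rel2_def by auto
  qed
  then show ?thesis by simp
qed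

text \<open>Off \<open>l\<close>, the lines through \<open>x\<close> meeting \<open>l\<close>, the parallel to \<open>l\<close> and the lines skew to \<open>l\<close>
  partition the pencil of \<open>x\<close>.\<close>

lemma card_pencil_rel3_off_line:
  fixes l :: "(('k::{field,finite})^'n) set"
  assumes "l \<in> affine_lines" "x \<notin> l"
  shows "real (card {l' \<in> pencil x. rel3 l l'}) = real (card (pencil x)) - real CARD('k) - 1"
proof -
  let ?S1 = "{l' \<in> pencil x. rel1 l l'}"
  let ?S2 = "{l' \<in> pencil x. rel2 l l'}"
  have eq: "{l' \<in> pencil x. rel3 l l'} = pencil x - (?S1 \<union> ?S2)"
    using assms unfolding rel1_def rel2_def rel3_def by auto
  have "?S1 \<inter> ?S2 = {}"
    using parallel_affine_lines_eq assms(1) unfolding rel1_def rel2_def by blast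
  then have "card (?S1 \<union> ?S2) = CARD('k) + 1"
    using card_Un_disjoint[of ?S1 ?S2] card_pencil_rel1_off_line[OF assms]
      card_pencil_rel2_off_line[OF assms] by simp
  moreover have "?S1 \<union> ?S2 \<subseteq> pencil x" by auto
  then have "card (pencil x - (?S1 \<union> ?S2)) = card (pencil x) - card (?S1 \<union> ?S2)"
    and "card (?S1 \<union> ?S2) \<le> card (pencil x)"
    by (simp_all add: card_Diff_subset card_mono)
  ultimately show ?thesis unfolding eq by (simp add: of_nat_diff)
qed

section \<open>The incidence map and its transpose\<close>

definition pencil_comb :: "(('k::{field,finite})^'n \<Rightarrow> real) \<Rightarrow> ('k^'n) set \<Rightarrow> real" where
  "pencil_comb c = (\<lambda>l. \<Sum>p\<in>UNIV. c p * pencil_vec p l)"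

definition pencil_sums :: "((('k::{field,finite})^'n) set \<Rightarrow> real) \<Rightarrow> 'k^'n \<Rightarrow> real" where
  "pencil_sums f p = (\<Sum>l\<in>pencil p. f l)"

lemma pencil_comb_apply: "pencil_comb c l = (if l \<in> affine_lines then (\<Sum>x\<in>l. c x) else 0)"
  unfolding pencil_comb_def pencil_vec_def
  by (auto simp: if_distrib sum.If_cases Int_def)

lemma pencil_comb_in_line_space: "pencil_comb c \<in> line_space"
  unfolding line_space_def by (simp add: pencil_comb_apply)

lemma pencil_comb_add: "pencil_comb (\<lambda>p. u p + w p) = (\<lambda>l. pencil_comb u l + pencil_comb w l)"
  unfolding pencil_comb_def by (simp add: sum.distrib algebra_simps)

lemma pencil_sums_pencil_comb:
  fixes c :: "('k::{field,finite})^'n \<Rightarrow> real"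
  shows "pencil_sums (pencil_comb c) p
    = (pencil_size (real CARD('k)) CARD('n) - 1) * c p + (\<Sum>x\<in>UNIV. c x)"
proof -
  have "pencil_sums (pencil_comb c) p = (\<Sum>l\<in>pencil p. \<Sum>x\<in>l. c x)"
    unfolding pencil_sums_def by (rule sum.cong) (auto simp: pencil_comb_apply)
  then show ?thesis by (simp add: sum_over_pencil card_pencil)
qed

lemma card_inter_affine_lines:
  fixes l :: "(('k::{field,finite})^'n) set"
  assumes "l \<in> affine_lines" "l' \<in> affine_lines"
  shows "real (card (l \<inter> l'))
    = (if l' = l then real CARD('k) else 0) + (if rel1 l l' then 1 else 0)"
proof (cases "l' = l")
  case True
  then show ?thesis using card_affine_lines_mem[OF assms(1)] by (simp add: rel1_def)
next
  case False
  show ?thesis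
  proof (cases "rel1 l l'")
    case True
    then obtain x where "x \<in> l" "x \<in> l'" unfolding rel1_def by blast
    then have "l \<inter> l' = {x}" using affine_lines_meet_in_one_point assms False by metis
    then show ?thesis using True False by simp
  next
    case not_rel1: False
    then have "l \<inter> l' = {}" using False unfolding rel1_def by auto
    then show ?thesis using not_rel1 False by simp
  qed
qed

lemma pencil_comb_pencil_sums:
  fixes l :: "(('k::{field,finite})^'n) set"
  assumes "l \<in> affine_lines"
  shows "pencil_comb (pencil_sums f) l = real CARD('k) * f l + adj_op rel1 f l"
proof -
  have "pencil_comb (pencil_sums f) l
      = (\<Sum>x\<in>l. \<Sum>l'\<in>affine_lines. if x \<in> l' then f l' else 0)"
    using assms unfolding pencil_comb_apply pencil_sums_def by (simp add: sum.inter_filter)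
  also have "\<dots> = (\<Sum>l'\<in>affine_lines. \<Sum>x\<in>l. if x \<in> l' then f l' else 0)"
    by (rule sum.swap)
  also have "\<dots> = (\<Sum>l'\<in>affine_lines. f l' * real (card (l \<inter> l')))"
    by (rule sum.cong[OF refl]) (simp add: sum.inter_filter[symmetric] Int_def)
  also have "\<dots> = (\<Sum>l'\<in>affine_lines.
      (if l' = l then real CARD('k) * f l' else 0) + (if rel1 l l' then f l' else 0))"
    by (rule sum.cong[OF refl]) (simp add: card_inter_affine_lines[OF assms] algebra_simps)
  also have "\<dots> = real CARD('k) * f l + adj_op rel1 f l"
    using assms by (simp add: sum.distrib adj_op_def sum.inter_filter)
  finally show ?thesis .
qed

lemma adj_op_pencil_comb:
  fixes l :: "(('k::{field,finite})^'n) set"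
  assumes "l \<in> affine_lines"
  shows "adj_op R (pencil_comb c) l = (\<Sum>x\<in>UNIV. c x * real (card {l' \<in> pencil x. R l l'}))"
proof -
  have "adj_op R (pencil_comb c) l = (\<Sum>l'\<in>{l' \<in> affine_lines. R l l'}. \<Sum>x\<in>l'. c x)"
    unfolding adj_op_def using assms by (simp add: pencil_comb_apply)
  also have "\<dots> = (\<Sum>x\<in>UNIV. c x * real (card {l' \<in> pencil x. R l l'}))"
    unfolding sum_over_members_swap by (intro sum.cong refl arg_cong[where f = "\<lambda>A. _ * real (card A)"]) auto
  finally show ?thesis .
qed

lemma sum_mult_if_mem:
  fixes c :: "'a::finite \<Rightarrow> 'b::comm_ring_1"
  shows "(\<Sum>x\<in>UNIV. c x * (if x \<in> l then a else b))
    = a * (\<Sum>x\<in>l. c x) + b * ((\<Sum>x\<in>UNIV. c x) - (\<Sum>x\<in>l. c x))"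
proof -
  have "(\<Sum>x\<in>UNIV. c x) = (\<Sum>x\<in>l. c x) + (\<Sum>x\<in>UNIV - l. c x)"
    by (simp add: sum.subset_diff[of l UNIV])
  moreover have "(\<Sum>x\<in>UNIV. c x * (if x \<in> l then a else b))
      = (\<Sum>x\<in>l. a * c x) + (\<Sum>x\<in>UNIV - l. b * c x)"
    by (simp add: if_distrib sum.If_cases Compl_eq_Diff_UNIV mult.commute)
  ultimately show ?thesis by (simp add: sum_distrib_left)
qed

lemma adj_op_rel1_pencil_comb:
  fixes l :: "(('k::{field,finite})^'n) set"
  defines "q \<equiv> real CARD('k)" and "r \<equiv> pencil_size (real CARD('k)) CARD('n)"
  assumes l: "l \<in> affine_lines"
  shows "adj_op rel1 (pencil_comb c) l
    = (r - 1) * (\<Sum>x\<in>l. c x) + q * ((\<Sum>x\<in>UNIV. c x) - (\<Sum>x\<in>l. c x))"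
proof -
  have "real (card {l' \<in> pencil x. rel1 l l'}) = (if x \<in> l then r - 1 else q)" for x
  proof (cases "x \<in> l")
    case True
    then have "Suc (card (pencil x - {l})) = card (pencil x)" using l by (intro card_Suc_Diff1) auto
    then show ?thesis using True pencil_rel1_on_line[OF l True] card_pencil[of x]
      unfolding r_def by simp
  qed (use card_pencil_rel1_off_line[OF l, of x] in \<open>simp add: q_def\<close>)
  then show ?thesis unfolding adj_op_pencil_comb[OF l] by (simp add: sum_mult_if_mem)
qed

lemma adj_op_rel2_pencil_comb:
  fixes l :: "(('k::{field,finite})^'n) set"
  assumes l: "l \<in> affine_lines"
  shows "adj_op rel2 (pencil_comb c) l = (\<Sum>x\<in>UNIV. c x) - (\<Sum>x\<in>l. c x)"
proof -
  have "real (card {l' \<in> pencil x. rel2 l l'}) = (if x \<in> l then 0 else 1)" for x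
    using pencil_rel2_on_line[OF l, of x] card_pencil_rel2_off_line[OF l, of x] by auto
  then show ?thesis unfolding adj_op_pencil_comb[OF l] by (simp add: sum_mult_if_mem)
qed

lemma adj_op_rel3_pencil_comb:
  fixes l :: "(('k::{field,finite})^'n) set"
  defines "q \<equiv> real CARD('k)" and "r \<equiv> pencil_size (real CARD('k)) CARD('n)"
  assumes l: "l \<in> affine_lines"
  shows "adj_op rel3 (pencil_comb c) l = (r - q - 1) * ((\<Sum>x\<in>UNIV. c x) - (\<Sum>x\<in>l. c x))"
proof -
  have "real (card {l' \<in> pencil x. rel3 l l'}) = (if x \<in> l then 0 else r - q - 1)" for x
    using pencil_rel3_on_line[of x l] card_pencil_rel3_off_line[OF l, of x] card_pencil[of x]
    unfolding q_def r_def by auto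
  then show ?thesis unfolding adj_op_pencil_comb[OF l] by (simp add: sum_mult_if_mem)
qed

lemma pencil_size_minus_one: "q \<noteq> 1 \<Longrightarrow> (q - 1) * (pencil_size q n - 1) = q ^ n - q"
  unfolding pencil_size_def by (simp add: field_simps)

lemma pencil_size_ge_one:
  assumes "q > 1" "n \<ge> 1"
  shows "pencil_size q n \<ge> 1"
proof -
  have "q ^ 1 \<le> q ^ n" using assms by (intro power_increasing) auto
  then have "(q - 1) * (pencil_size q n - 1) \<ge> 0" using assms by (simp add: pencil_size_minus_one)
  then show ?thesis using assms by (simp add: zero_le_mult_iff)
qed

lemma pencil_size_gt_one:
  assumes "q > 1" "n \<ge> 2"
  shows "pencil_size q n > 1"
proof -
  have "q ^ 1 < q ^ n" using assms by (intro power_strict_increasing) auto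
  then have "(q - 1) * (pencil_size q n - 1) > 0" using assms by (simp add: pencil_size_minus_one)
  then show ?thesis using assms by (simp add: zero_less_mult_iff)
qed

lemma eigenvalues_via_pencil_size:
  fixes q :: real
  assumes "q \<noteq> 1" "n \<ge> 1"
  defines "r \<equiv> pencil_size q n"
  shows "(q ^ (n + 1) - q\<^sup>2) / (q - 1) = q * (r - 1)"
    and "(q ^ n - q\<^sup>2) / (q - 1) = r - q - 1"
    and "(q\<^sup>2 - q ^ n) / (q - 1) = - (r - q - 1)"
    and "(q\<^sup>2 - (q + 1) * q ^ n + q ^ (2 * n - 1)) / (q - 1) = (r - q - 1) * (q ^ (n - 1) - 1)"
proof -
  have q1: "q - 1 \<noteq> 0" using assms(1) by simp
  have base: "q ^ n - q = (q - 1) * (r - 1)" unfolding r_def using pencil_size_minus_one[OF assms(1)] ..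
  have "q ^ n - q\<^sup>2 = (q - 1) * (r - q - 1)" using base by (simp add: power2_eq_square algebra_simps)
  then show "(q ^ n - q\<^sup>2) / (q - 1) = r - q - 1" and "(q\<^sup>2 - q ^ n) / (q - 1) = - (r - q - 1)"
    using q1 by (simp_all add: field_simps)
  have "q ^ (n + 1) - q\<^sup>2 = q * (q ^ n - q)" by (simp add: power2_eq_square algebra_simps)
  also have "\<dots> = (q - 1) * (q * (r - 1))" unfolding base by simp
  finally show "(q ^ (n + 1) - q\<^sup>2) / (q - 1) = q * (r - 1)" using q1 by simp
  have "q ^ n = q * q ^ (n - 1)" "q ^ (2 * n - 1) = q ^ n * q ^ (n - 1)"
    using assms(2) by (simp_all add: power_Suc[symmetric] power_add[symmetric] mult_2)
  then have "q\<^sup>2 - (q + 1) * q ^ n + q ^ (2 * n - 1) = (q ^ n - q\<^sup>2) * (q ^ (n - 1) - 1)"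
    by (simp add: power2_eq_square algebra_simps)
  with \<open>q ^ n - q\<^sup>2 = (q - 1) * (r - q - 1)\<close>
  show "(q\<^sup>2 - (q + 1) * q ^ n + q ^ (2 * n - 1)) / (q - 1) = (r - q - 1) * (q ^ (n - 1) - 1)"
    using q1 by simp
qed

section \<open>The range of the incidence map\<close>

lemma common_eigenspaceI:
  fixes f :: "(('k::field)^'n) set \<Rightarrow> real"
  assumes "f \<in> line_space"
    and "\<And>l. l \<in> affine_lines \<Longrightarrow> adj_op rel1 f l = a * f l"
    and "\<And>l. l \<in> affine_lines \<Longrightarrow> adj_op rel2 f l = b * f l"
    and "\<And>l. l \<in> affine_lines \<Longrightarrow> adj_op rel3 f l = c * f l"
  shows "f \<in> common_eigenspace a b c"
proof -
  have "adj_op R f l = k * f l" if "l \<notin> affine_lines" for R k l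
    using assms(1) that unfolding line_space_def adj_op_def by simp
  then show ?thesis using assms unfolding common_eigenspace_def fun_eq_iff by blast
qed

lemma pencil_comb_const_in_V0:
  fixes m :: real
  shows "pencil_comb (\<lambda>_::('k::{field,finite})^'n. m) \<in> V0"
proof -
  let ?q = "real CARD('k)" and ?n = "CARD('n)"
  let ?r = "pencil_size ?q ?n" and ?N = "pencil_comb (\<lambda>_::'k^'n. m)"
  have q: "?q \<noteq> 1" using card_field_ge_two[where 'k = 'k] by simp
  have n: "?n \<ge> 1" by (simp add: Suc_leI)
  note eigenvalues = eigenvalues_via_pencil_size[OF q n]
  have total: "(\<Sum>x\<in>(UNIV::('k^'n) set). m) = m * ?q ^ ?n" by simp
  have qn: "?q ^ ?n = (?q - 1) * (?r - 1) + ?q" using pencil_size_minus_one[OF q, of ?n] by simp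
  have qn': "?q ^ ?n = ?q * ?q ^ (?n - 1)" using n by (simp add: power_Suc[symmetric])
  show ?thesis unfolding V0_def Let_def
  proof (rule common_eigenspaceI[OF pencil_comb_in_line_space])
    fix l :: "('k^'n) set"
    assume l: "l \<in> affine_lines"
    have on_l: "(\<Sum>x\<in>l. m) = m * ?q" using card_affine_lines_mem[OF l] by simp
    then have N: "?N l = m * ?q" using l by (simp add: pencil_comb_apply)
    show "adj_op rel1 ?N l = (?q ^ (?n + 1) - ?q\<^sup>2) / (?q - 1) * ?N l"
      unfolding adj_op_rel1_pencil_comb[OF l] on_l total N eigenvalues(1) qn
      by (simp add: algebra_simps)
    show "adj_op rel2 ?N l = (?q ^ (?n - 1) - 1) * ?N l"
      unfolding adj_op_rel2_pencil_comb[OF l] on_l total N qn' by (simp add: algebra_simps)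
    show "adj_op rel3 ?N l
        = (?q\<^sup>2 - (?q + 1) * ?q ^ ?n + ?q ^ (2 * ?n - 1)) / (?q - 1) * ?N l"
      unfolding adj_op_rel3_pencil_comb[OF l] on_l total N eigenvalues(4) unfolding qn'
      by (simp add: algebra_simps)
  qed
qed

lemma pencil_comb_in_V1:
  fixes c :: "('k::{field,finite})^'n \<Rightarrow> real"
  assumes total: "(\<Sum>x\<in>UNIV. c x) = 0"
  shows "pencil_comb c \<in> V1"
proof -
  let ?q = "real CARD('k)" and ?n = "CARD('n)"
  have q: "?q \<noteq> 1" using card_field_ge_two[where 'k = 'k] by simp
  have n: "?n \<ge> 1" by (simp add: Suc_leI)
  note eigenvalues = eigenvalues_via_pencil_size[OF q n]
  show ?thesis unfolding V1_def Let_def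
  proof (rule common_eigenspaceI[OF pencil_comb_in_line_space])
    fix l :: "('k^'n) set"
    assume l: "l \<in> affine_lines"
    then have N: "pencil_comb c l = (\<Sum>x\<in>l. c x)" by (simp add: pencil_comb_apply)
    show "adj_op rel1 (pencil_comb c) l = (?q ^ ?n - ?q\<^sup>2) / (?q - 1) * pencil_comb c l"
      unfolding adj_op_rel1_pencil_comb[OF l] total N eigenvalues(2) by (simp add: algebra_simps)
    show "adj_op rel2 (pencil_comb c) l = - 1 * pencil_comb c l"
      unfolding adj_op_rel2_pencil_comb[OF l] total N by simp
    show "adj_op rel3 (pencil_comb c) l = (?q\<^sup>2 - ?q ^ ?n) / (?q - 1) * pencil_comb c l"
      unfolding adj_op_rel3_pencil_comb[OF l] total N eigenvalues(3) by (simp add: algebra_simps)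
  qed
qed

text \<open>Subtracting the mean splits a combination of pencils into a constant and a combination of
  total weight zero.\<close>

lemma pencil_comb_in_V0_plus_V1:
  fixes c :: "('k::{field,finite})^'n \<Rightarrow> real"
  shows "pencil_comb c \<in> {(\<lambda>l. f l + g l) | f g. f \<in> V0 \<and> g \<in> V1}"
proof -
  define m where "m = (\<Sum>x\<in>UNIV. c x) / real CARD('k^'n)"
  have "(\<Sum>x\<in>UNIV. c x - m) = 0" unfolding m_def by (simp add: sum_subtractf)
  then have "pencil_comb (\<lambda>x. c x - m) \<in> V1" by (rule pencil_comb_in_V1)
  moreover have "pencil_comb c = (\<lambda>l. pencil_comb (\<lambda>_. m) l + pencil_comb (\<lambda>x. c x - m) l)"
    unfolding pencil_comb_add[symmetric] by simp
  ultimately show ?thesis using pencil_comb_const_in_V0 by blast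
qed

text \<open>\<open>N N\<^sup>T = q I + B\<^sub>1\<close> inverts on an eigenvector of \<open>B\<^sub>1\<close> whose eigenvalue is not \<open>-q\<close>.\<close>

lemma rel1_eigenvector_eq_pencil_comb:
  fixes f :: "(('k::{field,finite})^'n) set \<Rightarrow> real"
  assumes "f \<in> line_space" "adj_op rel1 f = (\<lambda>l. a * f l)" "real CARD('k) + a \<noteq> 0"
  shows "f = pencil_comb (\<lambda>p. pencil_sums f p / (real CARD('k) + a))"
proof
  fix l
  show "f l = pencil_comb (\<lambda>p. pencil_sums f p / (real CARD('k) + a)) l"
  proof (cases "l \<in> affine_lines")
    case True
    have "pencil_comb (\<lambda>p. pencil_sums f p / (real CARD('k) + a)) l
        = pencil_comb (pencil_sums f) l / (real CARD('k) + a)"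
      using True by (simp add: pencil_comb_apply sum_divide_distrib)
    also have "\<dots> = f l"
      using assms(2,3) by (simp add: pencil_comb_pencil_sums[OF True] field_simps)
    finally show ?thesis by simp
  next
    case False
    then show ?thesis using assms(1) by (simp add: line_space_def pencil_comb_apply)
  qed
qed

lemma V0_subset_range_pencil_comb:
  "(V0 :: ((('k::{field,finite})^'n) set \<Rightarrow> real) set) \<subseteq> range pencil_comb"
proof
  fix f :: "('k^'n) set \<Rightarrow> real"
  let ?q = "real CARD('k)" and ?n = "CARD('n)"
  let ?a = "(?q ^ (?n + 1) - ?q\<^sup>2) / (?q - 1)"
  have q: "?q > 1" using card_field_ge_two[where 'k = 'k] by simp
  then have q1: "?q \<noteq> 1" by simp
  have n: "?n \<ge> 1" by (simp add: Suc_leI)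
  assume "f \<in> V0"
  then have "f \<in> line_space" and "adj_op rel1 f = (\<lambda>l. ?a * f l)"
    unfolding V0_def Let_def common_eigenspace_def by blast+
  moreover have "?q + ?a \<noteq> 0"
    unfolding eigenvalues_via_pencil_size(1)[OF q1 n] using q pencil_size_ge_one[OF q n]
    by (simp add: algebra_simps)
  ultimately show "f \<in> range pencil_comb" by (blast dest: rel1_eigenvector_eq_pencil_comb)
qed

lemma V1_subset_range_pencil_comb:
  assumes "CARD('n::finite) \<ge> 2"
  shows "(V1 :: ((('k::{field,finite})^'n) set \<Rightarrow> real) set) \<subseteq> range pencil_comb"
proof
  fix f :: "('k^'n) set \<Rightarrow> real"
  let ?q = "real CARD('k)" and ?n = "CARD('n)"
  let ?a = "(?q ^ ?n - ?q\<^sup>2) / (?q - 1)"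
  have q: "?q > 1" using card_field_ge_two[where 'k = 'k] by simp
  then have q1: "?q \<noteq> 1" by simp
  have n: "?n \<ge> 1" using assms by simp
  assume "f \<in> V1"
  then have "f \<in> line_space" and "adj_op rel1 f = (\<lambda>l. ?a * f l)"
    unfolding V1_def Let_def common_eigenspace_def by blast+
  moreover have "?q + ?a \<noteq> 0"
    unfolding eigenvalues_via_pencil_size(2)[OF q1 n] using q pencil_size_gt_one[OF q assms]
    by simp
  ultimately show "f \<in> range pencil_comb" by (blast dest: rel1_eigenvector_eq_pencil_comb)
qed

text \<open>\<open>N\<^sup>T N = (r - 1) I + J\<close>: if \<open>N c = 0\<close>, summing \<open>(r - 1) c p + \<Sum>c = 0\<close> over all \<open>p\<close> gives
  \<open>\<Sum>c = 0\<close>, and then \<open>c = 0\<close> because \<open>r > 1\<close>.\<close>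

lemma pencil_comb_eq_zeroD:
  fixes c :: "('k::{field,finite})^'n \<Rightarrow> real"
  assumes n: "CARD('n) \<ge> 2" and zero: "pencil_comb c = (\<lambda>_. 0)"
  shows "c p = 0"
proof -
  let ?q = "real CARD('k)" and ?n = "CARD('n)"
  let ?r = "pencil_size ?q ?n" and ?S = "\<Sum>x\<in>UNIV. c x"
  have r: "?r > 1" using pencil_size_gt_one card_field_ge_two[where 'k = 'k] n by simp
  have pointwise: "(?r - 1) * c x + ?S = 0" for x
    using pencil_sums_pencil_comb[of c x] zero by (simp add: pencil_sums_def)
  have "(?r - 1 + ?q ^ ?n) * ?S = (?r - 1) * ?S + ?q ^ ?n * ?S" by (simp add: algebra_simps)
  also have "\<dots> = (\<Sum>x\<in>UNIV. (?r - 1) * c x + ?S)"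
    by (simp add: sum.distrib flip: sum_distrib_left)
  also have "\<dots> = 0" using pointwise by simp
  finally have "(?r - 1 + ?q ^ ?n) * ?S = 0" .
  moreover have "?r - 1 + ?q ^ ?n > 0" using r by (simp add: add_pos_pos)
  ultimately have "?S = 0" by simp
  then show ?thesis using pointwise[of p] r by simp
qed

theorem theorem5p13:
  assumes "CARD('n::finite) \<ge> 3"
  shows "(\<forall>c :: ('k::{field,finite})^'n \<Rightarrow> real.
            (\<lambda>l. \<Sum>p\<in>UNIV. c p * pencil_vec p l) = (\<lambda>l. 0) \<longrightarrow> (\<forall>p. c p = 0))
       \<and> {(\<lambda>l. \<Sum>p\<in>UNIV. c p * pencil_vec p l) | c :: ('k::{field,finite})^'n \<Rightarrow> real. True}
         = {(\<lambda>l. f l + g l) | f g. f \<in> (V0 :: (('k^'n) set \<Rightarrow> real) set) \<and> g \<in> V1}"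
proof -
  have n: "CARD('n) \<ge> 2" using assms by simp
  have "{pencil_comb c | c :: 'k^'n \<Rightarrow> real. True}
      = {(\<lambda>l. f l + g l) | f g. f \<in> (V0 :: (('k^'n) set \<Rightarrow> real) set) \<and> g \<in> V1}"
  proof (intro equalityI subsetI)
    fix h
    assume "h \<in> {pencil_comb c | c :: 'k^'n \<Rightarrow> real. True}"
    then show "h \<in> {(\<lambda>l. f l + g l) | f g. f \<in> V0 \<and> g \<in> V1}"
      using pencil_comb_in_V0_plus_V1 by blast
  next
    fix h
    assume "h \<in> {(\<lambda>l. f l + g l) | f g. f \<in> (V0 :: (('k^'n) set \<Rightarrow> real) set) \<and> g \<in> V1}"
    then obtain u w :: "'k^'n \<Rightarrow> real"
      where "h = (\<lambda>l. pencil_comb u l + pencil_comb w l)"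
      using V0_subset_range_pencil_comb V1_subset_range_pencil_comb[OF n] by blast
    then show "h \<in> {pencil_comb c | c :: 'k^'n \<Rightarrow> real. True}"
      unfolding pencil_comb_add[symmetric] by blast
  qed
  then show ?thesis using pencil_comb_eq_zeroD[OF n] unfolding pencil_comb_def by blast
qed

end
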